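(* Let $G$ be a non-supergraceful graph having a semitotal labeling $\varphi$ with $1 \in N(\varphi)$. Then there is a connected supergraceful graph $H$ containing an induced subgraph isomorphic to $G$.
   Context: Graphs are finite, simple. For a labeling $\varphi: V(G) \to \mathbb{Z}_{>0}$ let $N(\varphi) = \{\varphi(x) : x \in V(G)\}$ and $E(\varphi) = \{|\varphi(x)-\varphi(y)| : xy \in E(G)\}$. A total labeling of a graph with $p$ nodes and $q$ edges is a map $\varphi$ such that the $p$ node labels and $q$ edge labels are pairwise distinct and $N(\varphi) \cup E(\varphi) = \{1,\dots,p+q\}$; a graph is supergraceful if it has one, non-supergraceful otherwise. For non-supergraceful $G$, let $q_0>0$ be the least integer such that there is a labeling with all node and edge labels pairwise distinct and $N(\varphi)\cup E(\varphi) \subseteq \{1,\dots,p+q+q_0\}$; such a labeling is a semitotal labeling. *)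

theory Defs
  imports Main
begin

definition simple_graph :: "'a set \<Rightarrow> 'a set set \<Rightarrow> bool" where
  "simple_graph V E \<longleftrightarrow> finite V \<and> (\<forall>e\<in>E. e \<subseteq> V \<and> card e = 2)"

definition edge_label :: "('a \<Rightarrow> nat) \<Rightarrow> 'a set \<Rightarrow> nat" where
  "edge_label \<phi> e = Max (\<phi> ` e) - Min (\<phi> ` e)"

definition distinct_labeling :: "'a set \<Rightarrow> 'a set set \<Rightarrow> ('a \<Rightarrow> nat) \<Rightarrow> bool" where
  "distinct_labeling V E \<phi> \<longleftrightarrow>
     (\<forall>x\<in>V. 0 < \<phi> x) \<and> inj_on \<phi> V \<and> inj_on (edge_label \<phi>) E \<and>
     \<phi> ` V \<inter> edge_label \<phi> ` E = {}"

definition total_labeling :: "'a set \<Rightarrow> 'a set set \<Rightarrow> ('a \<Rightarrow> nat) \<Rightarrow> bool" where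
  "total_labeling V E \<phi> \<longleftrightarrow> distinct_labeling V E \<phi> \<and>
     \<phi> ` V \<union> edge_label \<phi> ` E = {1..card V + card E}"

definition supergraceful :: "'a set \<Rightarrow> 'a set set \<Rightarrow> bool" where
  "supergraceful V E \<longleftrightarrow> (\<exists>\<phi>. total_labeling V E \<phi>)"

definition labeling_within :: "'a set \<Rightarrow> 'a set set \<Rightarrow> ('a \<Rightarrow> nat) \<Rightarrow> nat \<Rightarrow> bool" where
  "labeling_within V E \<phi> k \<longleftrightarrow> distinct_labeling V E \<phi> \<and>
     \<phi> ` V \<union> edge_label \<phi> ` E \<subseteq> {1..card V + card E + k}"

definition q0 :: "'a set \<Rightarrow> 'a set set \<Rightarrow> nat" where
  "q0 V E = (LEAST k. 0 < k \<and> (\<exists>\<phi>. labeling_within V E \<phi> k))"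

definition semitotal_labeling :: "'a set \<Rightarrow> 'a set set \<Rightarrow> ('a \<Rightarrow> nat) \<Rightarrow> bool" where
  "semitotal_labeling V E \<phi> \<longleftrightarrow> labeling_within V E \<phi> (q0 V E)"

definition node_labels :: "'a set \<Rightarrow> ('a \<Rightarrow> nat) \<Rightarrow> nat set" where
  "node_labels V \<phi> = \<phi> ` V"

definition connected_graph :: "'a set \<Rightarrow> 'a set set \<Rightarrow> bool" where
  "connected_graph V E \<longleftrightarrow>
     (\<forall>x\<in>V. \<forall>y\<in>V. (x, y) \<in> {(u, v). {u, v} \<in> E}\<^sup>*)"

definition has_induced_copy ::
  "'b set \<Rightarrow> 'b set set \<Rightarrow> 'a set \<Rightarrow> 'a set set \<Rightarrow> bool" where
  "has_induced_copy VH EH VG EG \<longleftrightarrow>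
     (\<exists>f. inj_on f VG \<and> f ` VG \<subseteq> VH \<and>
          (\<forall>x\<in>VG. \<forall>y\<in>VG. {x, y} \<in> EG \<longleftrightarrow> {f x, f y} \<in> EH))"

end

theory Submission
  imports Defs
begin

(* Let A and B be the node and edge labels of G, disjoint subsets of {1..M}, and C the rest
   of {1..M}. Relabel G by 2 phi - 1, so that its node labels are odd and its edge labels form
   2B, and add a hub 4M+1 together with further nodes so that each k in {1..M} accounts for the
   four labels 2k-1, 2k, 4M+1-2k, 4M+2-2k:
     k in A: nodes 2k-1 and 4M+1-2k, edges hub--(4M+1-2k) and hub--(2k-1);
     k in B: the copied edge labelled 2k, node 4M+2-2k, edges hub--(4M+2-2k), 1--(4M+2-2k);
     k in C: nodes 2k and 4M+2-2k, edges 1--2k and 1--(4M+2-2k).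
   So the labels of H under the identity cover {1..4M+1}, while H has at most 4M+1 nodes and
   edges; hence the identity is a total labeling. Node 1 is the copy of the node labelled 1,
   and every new node is adjacent to it or to the hub, so H is connected. Every new edge
   contains the hub or an even node, whereas the copied nodes are odd and below the hub, so
   the copy of G is induced. *)

lemma edge_label_pair:
  "edge_label \<phi> {x, y} = (if \<phi> x \<le> \<phi> y then \<phi> y - \<phi> x else \<phi> x - \<phi> y)"
  by (auto simp: edge_label_def max_def min_def)

lemma edge_label_mem_atLeastAtMost:
  assumes "card e = 2" and "inj_on \<phi> e" and "\<phi> ` e \<subseteq> {1..n}"
  shows "edge_label \<phi> e \<in> {1..n}"
proof -
  obtain x y where e: "e = {x, y}" "x \<noteq> y" using assms(1) by (meson card_2_iff)
  then have "\<phi> x \<noteq> \<phi> y" using assms(2) by auto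
  then show ?thesis using assms(3) unfolding e by (auto simp: edge_label_pair)
qed

lemma simple_graph_finite_edges: "simple_graph V E \<Longrightarrow> finite E"
  unfolding simple_graph_def by (meson Pow_iff finite_Pow_iff finite_subset subsetI)

lemma total_labelingI_card:
  assumes "finite V" and "finite E"
    and labels: "\<phi> ` V \<union> edge_label \<phi> ` E = {1..n}"
    and card: "card V + card E \<le> n"
  shows "total_labeling V E \<phi>"
proof -
  let ?L = "\<phi> ` V" and ?K = "edge_label \<phi> ` E"
  have "n = card (?L \<union> ?K)" using labels by simp
  moreover have "card (?L \<union> ?K) \<le> card ?L + card ?K" by (rule card_Un_le)
  moreover have "card ?L \<le> card V" "card ?K \<le> card E"
    using assms(1,2) by (simp_all add: card_image_le)
  ultimately have tight:
    "card (?L \<union> ?K) = card ?L + card ?K" "card ?L = card V" "card ?K = card E"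
    using card by linarith+
  have "?L \<inter> ?K = {}"
    using tight(1) card_Un_Int[of ?L ?K] assms(1,2) by simp
  moreover have "inj_on \<phi> V" "inj_on (edge_label \<phi>) E"
    using tight(2,3) assms(1,2) by (simp_all add: eq_card_imp_inj_on)
  moreover have "card V + card E = n" using tight labels by simp
  moreover have "\<forall>x\<in>V. 0 < \<phi> x" using labels by fastforce
  ultimately show ?thesis
    using labels unfolding total_labeling_def distinct_labeling_def by auto
qed

lemma connected_graphI_hub:
  assumes "\<And>v. v \<in> V \<Longrightarrow> (v, h) \<in> {(u, v). {u, v} \<in> E}\<^sup>*"
  shows "connected_graph V E"
proof -
  let ?R = "{(u, v). {u, v} \<in> E}"
  have "?R\<inverse> = ?R" by (auto simp: insert_commute)
  then have "(h, v) \<in> ?R\<^sup>*" if "v \<in> V" for v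
    using assms[OF that] rtrancl_converseI[of v h ?R] by simp
  with assms show ?thesis
    unfolding connected_graph_def by (blast intro: rtrancl_trans)
qed

locale bounded_labeled_graph =
  fixes V :: "'a set" and E :: "'a set set" and \<phi> :: "'a \<Rightarrow> nat" and M :: nat
  assumes simple: "simple_graph V E"
    and distinct: "distinct_labeling V E \<phi>"
    and bounded: "\<phi> ` V \<union> edge_label \<phi> ` E \<subseteq> {1..M}"
    and one_node_label: "1 \<in> \<phi> ` V"
begin

definition A :: "nat set" where "A = \<phi> ` V"
definition B :: "nat set" where "B = edge_label \<phi> ` E"
definition C :: "nat set" where "C = {1..M} - A - B"
abbreviation hub :: nat where "hub \<equiv> 4 * M + 1"

definition copy :: "'a \<Rightarrow> nat" where
  "copy x = 2 * \<phi> x - 1"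

definition host_nodes :: "nat set" where
  "host_nodes = (\<lambda>a. 2 * a - 1) ` A \<union> {hub} \<union> (\<lambda>a. hub - 2 * a) ` A
     \<union> (\<lambda>c. 2 * c) ` C \<union> (\<lambda>k. hub + 1 - 2 * k) ` (B \<union> C)"

definition host_edges :: "nat set set" where
  "host_edges = (\<lambda>e. copy ` e) ` E
     \<union> (\<lambda>a. {hub, 2 * a - 1}) ` A \<union> (\<lambda>a. {hub, hub - 2 * a}) ` A
     \<union> (\<lambda>c. {1, 2 * c}) ` C \<union> (\<lambda>k. {1, hub + 1 - 2 * k}) ` (B \<union> C)
     \<union> (\<lambda>b. {hub, hub + 1 - 2 * b}) ` B"

lemma finite_nodes: "finite V"
  using simple unfolding simple_graph_def by blast

lemma edge_cases:
  assumes "e \<in> E"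
  obtains x y where "e = {x, y}" "x \<in> V" "y \<in> V" "x \<noteq> y"
proof -
  have "e \<subseteq> V" "card e = 2" using simple assms unfolding simple_graph_def by blast+
  then show ?thesis using that by (metis card_2_iff insert_subset)
qed

lemma finite_edges: "finite E"
  using simple by (rule simple_graph_finite_edges)

lemma finite_labels: "finite A" "finite B" "finite C"
  using finite_nodes finite_edges unfolding A_def B_def C_def by simp_all

lemma one_mem_node_labels: "1 \<in> A"
  using one_node_label unfolding A_def .

lemma label_bounds:
  "a \<in> A \<Longrightarrow> a \<in> {1..M}" "b \<in> B \<Longrightarrow> b \<in> {1..M}" "c \<in> C \<Longrightarrow> c \<in> {1..M}"
  using bounded unfolding A_def B_def C_def by auto

lemma node_edge_labels_disjoint: "A \<inter> B = {}"
  using distinct unfolding distinct_labeling_def A_def B_def by blast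

lemma card_labels: "card A + card B + card C = M"
proof -
  have "{1..M} = (A \<union> B) \<union> C" using label_bounds C_def by auto
  then have "M = card ((A \<union> B) \<union> C)" by (metis card_atLeastAtMost diff_Suc_1)
  also have "\<dots> = card (A \<union> B) + card C"
    using finite_labels by (intro card_Un_disjoint) (auto simp: C_def)
  also have "card (A \<union> B) = card A + card B"
    using node_edge_labels_disjoint finite_labels by (simp add: card_Un_disjoint)
  finally show ?thesis by simp
qed

lemma card_edge_labels: "card B = card E"
  using distinct finite_edges unfolding distinct_labeling_def B_def by (simp add: card_image)

lemma inj_on_copy: "inj_on copy V"
proof (rule inj_onI)
  fix x y assume "x \<in> V" "y \<in> V" "copy x = copy y"
  then show "x = y"
    using distinct unfolding distinct_labeling_def copy_def inj_on_def
    by (metis Suc_diff_1 Suc_mult_cancel1 nat_0_less_mult_iff zero_less_numeral)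
qed

lemma copy_odd_below_hub: "x \<in> V \<Longrightarrow> odd (copy x) \<and> copy x < hub"
  using label_bounds(1)[of "\<phi> x"] unfolding copy_def A_def by auto

lemma edge_label_copy: "e \<in> E \<Longrightarrow> edge_label id (copy ` e) = 2 * edge_label \<phi> e"
  by (elim edge_cases)
    (use distinct in \<open>auto simp: distinct_labeling_def copy_def edge_label_pair\<close>)

lemma host_nodesI:
  "a \<in> A \<Longrightarrow> 2 * a - 1 \<in> host_nodes"
  "hub \<in> host_nodes"
  "a \<in> A \<Longrightarrow> hub - 2 * a \<in> host_nodes"
  "c \<in> C \<Longrightarrow> 2 * c \<in> host_nodes"
  "k \<in> B \<union> C \<Longrightarrow> hub + 1 - 2 * k \<in> host_nodes"
  unfolding host_nodes_def by blast+

lemma host_edgesI: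
  "a \<in> A \<Longrightarrow> {hub, 2 * a - 1} \<in> host_edges"
  "a \<in> A \<Longrightarrow> {hub, hub - 2 * a} \<in> host_edges"
  "c \<in> C \<Longrightarrow> {1, 2 * c} \<in> host_edges"
  "k \<in> B \<union> C \<Longrightarrow> {1, hub + 1 - 2 * k} \<in> host_edges"
  "b \<in> B \<Longrightarrow> {hub, hub + 1 - 2 * b} \<in> host_edges"
  "e \<in> E \<Longrightarrow> copy ` e \<in> host_edges"
  unfolding host_edges_def by blast+

lemma host_node_cases:
  assumes "v \<in> host_nodes"
  obtains (odd) a where "a \<in> A" "v = 2 * a - 1" | (hub) "v = hub"
    | (mirror) a where "a \<in> A" "v = hub - 2 * a" | (even) c where "c \<in> C" "v = 2 * c"
    | (high) k where "k \<in> B \<union> C" "v = hub + 1 - 2 * k"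
  using assms unfolding host_nodes_def by (elim UnE imageE) (auto intro: that)

lemma host_edge_cases:
  assumes "e \<in> host_edges"
  obtains (copied) x y where "{x, y} \<in> E" "x \<in> V" "y \<in> V" "x \<noteq> y" "e = {copy x, copy y}"
    | (hub_node) a where "a \<in> A" "e = {hub, 2 * a - 1}"
    | (hub_mirror) a where "a \<in> A" "e = {hub, hub - 2 * a}"
    | (one_free) c where "c \<in> C" "e = {1, 2 * c}"
    | (one_high) k where "k \<in> B \<union> C" "e = {1, hub + 1 - 2 * k}"
    | (hub_high) b where "b \<in> B" "e = {hub, hub + 1 - 2 * b}"
  using assms unfolding host_edges_def
proof (elim UnE imageE)
  fix e' assume e': "e' \<in> E" "e = copy ` e'"
  from e'(1) obtain x y where "e' = {x, y}" "x \<in> V" "y \<in> V" "x \<noteq> y" by (rule edge_cases)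
  with e' show thesis by (intro that(1)[of x y]) simp_all
qed (auto intro: that)

lemma copy_mem_host_nodes: "x \<in> V \<Longrightarrow> copy x \<in> host_nodes"
  using host_nodesI(1) unfolding copy_def A_def by blast

lemma one_mem_host_nodes: "1 \<in> host_nodes"
  using host_nodesI(1)[OF one_mem_node_labels] by simp

lemma host_nodes_bounded: "host_nodes \<subseteq> {1..hub}"
  unfolding host_nodes_def by (auto dest!: label_bounds)

lemma simple_host: "simple_graph host_nodes host_edges"
  unfolding simple_graph_def
proof
  show "finite host_nodes"
    using finite_labels unfolding host_nodes_def by simp
  show "\<forall>e\<in>host_edges. e \<subseteq> host_nodes \<and> card e = 2"
  proof
    fix e assume "e \<in> host_edges"
    then show "e \<subseteq> host_nodes \<and> card e = 2"
    proof (cases rule: host_edge_cases)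
      case (copied x y)
      moreover have "copy x \<noteq> copy y" using copied inj_on_copy by (meson inj_on_def)
      ultimately show ?thesis using copy_mem_host_nodes by simp
    next
      case (hub_node a)
      then show ?thesis unfolding host_nodes_def by (auto dest!: label_bounds)
    next
      case (hub_mirror a)
      then show ?thesis unfolding host_nodes_def by (auto dest!: label_bounds)
    next
      case (one_free c)
      then show ?thesis using one_mem_host_nodes unfolding host_nodes_def by auto
    next
      case (one_high k)
      then show ?thesis
        using one_mem_host_nodes unfolding host_nodes_def by (auto dest!: label_bounds)
    next
      case (hub_high b)
      then show ?thesis unfolding host_nodes_def by (auto dest!: label_bounds)
    qed
  qed
qed

lemma connected_host: "connected_graph host_nodes host_edges"
proof (rule connected_graphI_hub)
  let ?R = "{(u, v). {u, v} \<in> host_edges}"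
  have adj: "(v, u) \<in> ?R\<^sup>*" if "{u, v} \<in> host_edges" for u v
    using that by (auto simp: insert_commute)
  have one_hub: "(1, hub) \<in> ?R\<^sup>*"
    using adj host_edgesI(1)[OF one_mem_node_labels] by simp
  fix v assume "v \<in> host_nodes"
  then show "(v, hub) \<in> ?R\<^sup>*"
  proof (cases rule: host_node_cases)
    case (odd a)
    then show ?thesis using adj host_edgesI(1) by simp
  next
    case (mirror a)
    then show ?thesis using adj host_edgesI(2) by simp
  next
    case (even c)
    then have "(v, 1) \<in> ?R\<^sup>*" using adj host_edgesI(3) by simp
    then show ?thesis using one_hub by (rule rtrancl_trans)
  next
    case (high k)
    then have "(v, 1) \<in> ?R\<^sup>*" using adj host_edgesI(4) by simp
    then show ?thesis using one_hub by (rule rtrancl_trans)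
  qed simp
qed

lemma label_range_cases:
  assumes "l \<in> {1..4 * M}"
  obtains k where "k \<in> {1..M}" "l \<in> {2 * k - 1, 2 * k, hub - 2 * k, hub + 1 - 2 * k}"
proof -
  consider (even_l) j where "l = 2 * j" | (odd_l) j where "l = 2 * j + 1"
    by (cases "even l") (auto elim: evenE oddE)
  then show thesis
  proof cases
    case (even_l j)
    show thesis
    proof (cases "j \<le> M")
      case True
      then show thesis using even_l assms by (intro that[of j]) auto
    next
      case False
      then show thesis using even_l assms by (intro that[of "2 * M + 1 - j"]) auto
    qed
  next
    case (odd_l j)
    show thesis
    proof (cases "j < M")
      case True
      then show thesis using odd_l assms by (intro that[of "j + 1"]) auto
    next
      case False
      then show thesis using odd_l assms by (intro that[of "2 * M - j"]) auto
    qed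
  qed
qed

lemma labels_covered_by:
  assumes k: "k \<in> {1..M}"
  shows "{2 * k - 1, 2 * k, hub - 2 * k, hub + 1 - 2 * k}
    \<subseteq> host_nodes \<union> edge_label id ` host_edges"
proof -
  have covered: "l \<in> host_nodes \<union> edge_label id ` host_edges"
    if "{u, v} \<in> host_edges" "l = edge_label id {u, v}" for l u v
    using that by blast
  have labels: "2 * k - 1 = edge_label id {hub, hub + 1 - 2 * k}"
    "2 * k - 1 = edge_label id {1, 2 * k}"
    "hub - 2 * k = edge_label id {1, hub + 1 - 2 * k}"
    "2 * k = edge_label id {hub, hub - 2 * k}"
    "hub + 1 - 2 * k = edge_label id {hub, 2 * k - 1}"
    using k by (auto simp: edge_label_pair)
  consider (node) "k \<in> A" | (edge) "k \<in> B" | (free) "k \<in> C" using k C_def by blast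
  then show ?thesis
  proof cases
    case node
    then show ?thesis
      using host_nodesI(1,3)[OF node] covered[OF host_edgesI(1)[OF node] labels(5)]
        covered[OF host_edgesI(2)[OF node] labels(4)]
      by simp
  next
    case edge
    then obtain e where "e \<in> E" "k = edge_label \<phi> e" unfolding B_def by blast
    then have "2 * k \<in> edge_label id ` host_edges"
      using edge_label_copy host_edgesI(6) by (metis image_eqI)
    moreover have "k \<in> B \<union> C" using edge by simp
    ultimately show ?thesis
      using host_nodesI(5) covered[OF host_edgesI(4) labels(3)]
        covered[OF host_edgesI(5)[OF edge] labels(1)]
      by simp
  next
    case free
    then have "k \<in> B \<union> C" by simp
    then show ?thesis
      using host_nodesI(4)[OF free] host_nodesI(5) covered[OF host_edgesI(3)[OF free] labels(2)]
        covered[OF host_edgesI(4) labels(3)]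
      by simp
  qed
qed

lemma host_labels_cover: "{1..hub} \<subseteq> host_nodes \<union> edge_label id ` host_edges"
proof
  fix l assume "l \<in> {1..hub}"
  then consider "l = hub" | "l \<in> {1..4 * M}" by fastforce
  then show "l \<in> host_nodes \<union> edge_label id ` host_edges"
  proof cases
    case 1
    then show ?thesis using host_nodesI(2) by simp
  next
    case 2
    then obtain k where "k \<in> {1..M}" "l \<in> {2 * k - 1, 2 * k, hub - 2 * k, hub + 1 - 2 * k}"
      by (rule label_range_cases) simp
    then show ?thesis using labels_covered_by by blast
  qed
qed

lemma card_host: "card host_nodes + card host_edges \<le> hub"
proof -
  have "card host_nodes \<le> card A + 1 + card A + card C + card (B \<union> C)"
    unfolding host_nodes_def
    by (intro order_trans[OF card_Un_le] add_mono card_image_le finite_labels finite_UnI) simp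
  moreover have "card host_edges \<le> card E + card A + card A + card C + card (B \<union> C) + card B"
    unfolding host_edges_def
    by (intro order_trans[OF card_Un_le] add_mono card_image_le finite_labels finite_UnI finite_edges)
  moreover have "card (B \<union> C) \<le> card B + card C" by (rule card_Un_le)
  ultimately show ?thesis using card_labels card_edge_labels by linarith
qed

lemma supergraceful_host: "supergraceful host_nodes host_edges"
  unfolding supergraceful_def
proof
  have "edge_label id e \<in> {1..hub}" if "e \<in> host_edges" for e
    using simple_host that host_nodes_bounded
    by (intro edge_label_mem_atLeastAtMost) (auto simp: simple_graph_def)
  then have "id ` host_nodes \<union> edge_label id ` host_edges = {1..hub}"
    using host_nodes_bounded host_labels_cover by auto
  then show "total_labeling host_nodes host_edges id"
    using simple_host simple_graph_finite_edges[OF simple_host] card_host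
    by (intro total_labelingI_card) (auto simp: simple_graph_def)
qed

lemma induced_copy: "has_induced_copy host_nodes host_edges V E"
  unfolding has_induced_copy_def
proof (intro exI conjI ballI)
  show "inj_on copy V" by (rule inj_on_copy)
  show "copy ` V \<subseteq> host_nodes" using copy_mem_host_nodes by blast
  fix x y assume x: "x \<in> V" and y: "y \<in> V"
  show "{x, y} \<in> E \<longleftrightarrow> {copy x, copy y} \<in> host_edges"
  proof
    assume "{x, y} \<in> E"
    then show "{copy x, copy y} \<in> host_edges" using host_edgesI(6) by force
  next
    have not_copy: "u \<notin> {copy x, copy y}" if "u = hub \<or> even u" for u
      using that copy_odd_below_hub[OF x] copy_odd_below_hub[OF y] by auto
    assume "{copy x, copy y} \<in> host_edges"
    then show "{x, y} \<in> E"
    proof (cases rule: host_edge_cases)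
      case (copied x' y')
      then have "{x, y} = {x', y'}"
        using inj_on_image_eq_iff[OF inj_on_copy, of "{x, y}" "{x', y'}"] x y by simp
      then show ?thesis using copied(1) by simp
    next
      case (hub_node a)
      then show ?thesis using not_copy[of hub] by simp
    next
      case (hub_mirror a)
      then show ?thesis using not_copy[of hub] by simp
    next
      case (one_free c)
      then show ?thesis using not_copy[of "2 * c"] by simp
    next
      case (one_high k)
      then have "even (hub + 1 - 2 * k)" using label_bounds(2,3) by fastforce
      then show ?thesis using one_high(2) not_copy[of "hub + 1 - 2 * k"] by simp
    next
      case (hub_high b)
      then show ?thesis using not_copy[of hub] by simp
    qed
  qed
qed

lemma connected_supergraceful_host:
  "\<exists>(VH :: nat set) EH. simple_graph VH EH \<and> connected_graph VH EH \<and>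
     supergraceful VH EH \<and> has_induced_copy VH EH V E"
  using simple_host connected_host supergraceful_host induced_copy by blast

end

theorem theorem8p8:
  fixes V :: "'a set" and E :: "'a set set" and \<phi> :: "'a \<Rightarrow> nat"
  assumes "simple_graph V E"
    and "\<not> supergraceful V E"
    and "semitotal_labeling V E \<phi>"
    and "1 \<in> node_labels V \<phi>"
  shows "\<exists>(VH :: nat set) EH. simple_graph VH EH \<and> connected_graph VH EH \<and>
           supergraceful VH EH \<and> has_induced_copy VH EH V E"
proof -
  have "labeling_within V E \<phi> (q0 V E)"
    using assms(3) unfolding semitotal_labeling_def .
  then have "distinct_labeling V E \<phi>"
    and "\<phi> ` V \<union> edge_label \<phi> ` E \<subseteq> {1..card V + card E + q0 V E}"
    unfolding labeling_within_def by simp_all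
  moreover have "1 \<in> \<phi> ` V" using assms(4) unfolding node_labels_def .
  ultimately have "bounded_labeled_graph V E \<phi> (card V + card E + q0 V E)"
    by (rule bounded_labeled_graph.intro[OF assms(1)])
  then show ?thesis by (rule bounded_labeled_graph.connected_supergraceful_host)
qed

end
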